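(* Let $\mathfrak T$ be a system with stateless maximal process space $\mathfrak S$, and let $f:2^{\mathfrak S}\to2^{\mathfrak S}$ be the operator interpreting $\langle\otimes\rangle$, namely $f(X)=\{(R,t)\in\mathfrak S:\exists M\in\mathcal X.\ M\sqsubseteq R\wedge(M,t)\in X\}$. Then $f$ is idempotent: $f(f(X))=f(X)$ for every $X\subseteq\mathfrak S$ (equivalently, $[\![\langle\otimes\rangle\langle\otimes\rangle\phi]\!]=[\![\langle\otimes\rangle\phi]\!]$ for every formula $\phi$ and valuation).
   Context: A system is $\mathfrak T=(S,s_0,T,I,\Sigma)$ with states $S$, initial state $s_0$, labels $\Sigma$, transitions $T\subseteq S\times\Sigma\times S$ and an irreflexive symmetric independence relation $I\subseteq T\times T$ (satisfying the transition-system-with-independence axioms). For $t=(s,a,s')$: $\sigma(t)=s,\tau(t)=s'$. Write $t\otimes t'$ iff $\sigma(t)=\sigma(t')$ and $tIt'$; $t\le t'$ iff $\tau(t)=\sigma(t')$ and not $tIt'$; $t\ominus t'$ iff $\tau(t)=\sigma(t')$ and $tIt'$. $\mathfrak X(s)$ is the set of transitions with source $s$ (maximal set). A conflict-free set is a set of transitions with a common source that are pairwise $\otimes$. A support set is a maximal set or a non-empty conflict-free set. For support sets, $M\sqsubseteq R$ iff $M\subseteq R$ and there is no $t\in R\setminus M$ with $t\otimes t'$ for all $t'\in M$. $\mathcal X$ is the set of all maximal sets $\mathfrak X(s)$ and all support sets $M$ with $M\sqsubseteq\mathfrak X(s)$ for some $s$ (maximal traces). $\mathfrak A=T\cup\{t_\epsilon\}$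 with $t_\epsilon$ a fresh empty transition. The stateless maximal process space is $\mathfrak S=\mathcal X\times\mathfrak A$. *)

theory Defs
  imports Main
begin

type_synonym ('s,'a) trans = "'s \<times> 'a \<times> 's"

definition src :: "('s,'a) trans \<Rightarrow> 's" where "src t = fst t"
definition tgt :: "('s,'a) trans \<Rightarrow> 's" where "tgt t = snd (snd t)"
definition lab :: "('s,'a) trans \<Rightarrow> 'a" where "lab t = fst (snd t)"

inductive tsim :: "(('s,'a) trans \<times> ('s,'a) trans) set \<Rightarrow> ('s,'a) trans \<Rightarrow> ('s,'a) trans \<Rightarrow> bool"
  for I where
  square: "((s,a,s1),(s,b,s2)) \<in> I \<Longrightarrow> ((s,a,s1),(s1,b,u)) \<in> I \<Longrightarrow> ((s,b,s2),(s2,a,u)) \<in> I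
     \<Longrightarrow> tsim I (s,a,s1) (s2,a,u)"
| refl: "tsim I t t"
| sym: "tsim I t t' \<Longrightarrow> tsim I t' t"
| trans: "tsim I t t' \<Longrightarrow> tsim I t' t'' \<Longrightarrow> tsim I t t''"

definition tsi :: "'s set \<Rightarrow> 's \<Rightarrow> ('s,'a) trans set \<Rightarrow> (('s,'a) trans \<times> ('s,'a) trans) set
   \<Rightarrow> 'a set \<Rightarrow> bool" where
  "tsi S s0 T I Sig \<longleftrightarrow>
     s0 \<in> S \<and> T \<subseteq> S \<times> Sig \<times> S \<and> I \<subseteq> T \<times> T \<and>
     irrefl I \<and> sym I \<and>
     (\<forall>s a s1 s2. (s,a,s1) \<in> T \<and> (s,a,s2) \<in> T \<longrightarrow> s1 = s2) \<and>
     (\<forall>s a s1 b s2. ((s,a,s1),(s,b,s2)) \<in> I \<longrightarrow>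
        (\<exists>u. ((s,a,s1),(s1,b,u)) \<in> I \<and> ((s,b,s2),(s2,a,u)) \<in> I)) \<and>
     (\<forall>s a s1 b u. ((s,a,s1),(s1,b,u)) \<in> I \<longrightarrow>
        (\<exists>s2. ((s,a,s1),(s,b,s2)) \<in> I \<and> ((s,b,s2),(s2,a,u)) \<in> I)) \<and>
     (\<forall>t t' w. tsim I t t' \<and> (t',w) \<in> I \<longrightarrow> (t,w) \<in> I)"

definition indep_conc :: "(('s,'a) trans \<times> ('s,'a) trans) set \<Rightarrow> ('s,'a) trans \<Rightarrow> ('s,'a) trans \<Rightarrow> bool" where
  "indep_conc I t t' \<longleftrightarrow> src t = src t' \<and> (t,t') \<in> I"

definition maxset :: "('s,'a) trans set \<Rightarrow> 's \<Rightarrow> ('s,'a) trans set" where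
  "maxset T s = {t \<in> T. src t = s}"

definition is_maxset :: "'s set \<Rightarrow> ('s,'a) trans set \<Rightarrow> ('s,'a) trans set \<Rightarrow> bool" where
  "is_maxset S T M \<longleftrightarrow> (\<exists>s\<in>S. M = maxset T s)"

definition conflict_free :: "('s,'a) trans set \<Rightarrow> (('s,'a) trans \<times> ('s,'a) trans) set
   \<Rightarrow> ('s,'a) trans set \<Rightarrow> bool" where
  "conflict_free T I M \<longleftrightarrow> M \<subseteq> T \<and> (\<exists>s. \<forall>t\<in>M. src t = s) \<and>
     (\<forall>t\<in>M. \<forall>t'\<in>M. t \<noteq> t' \<longrightarrow> indep_conc I t t')"

definition support_set :: "'s set \<Rightarrow> ('s,'a) trans set \<Rightarrow> (('s,'a) trans \<times> ('s,'a) trans) set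
   \<Rightarrow> ('s,'a) trans set \<Rightarrow> bool" where
  "support_set S T I M \<longleftrightarrow> is_maxset S T M \<or> (M \<noteq> {} \<and> conflict_free T I M)"

definition sqsub :: "(('s,'a) trans \<times> ('s,'a) trans) set \<Rightarrow> ('s,'a) trans set \<Rightarrow> ('s,'a) trans set \<Rightarrow> bool" where
  "sqsub I M R \<longleftrightarrow> M \<subseteq> R \<and> \<not> (\<exists>t \<in> R - M. \<forall>t' \<in> M. indep_conc I t t')"

definition Xsets :: "'s set \<Rightarrow> ('s,'a) trans set \<Rightarrow> (('s,'a) trans \<times> ('s,'a) trans) set
   \<Rightarrow> ('s,'a) trans set set" where
  "Xsets S T I = {M. is_maxset S T M} \<union>
     {M. support_set S T I M \<and> (\<exists>s\<in>S. sqsub I M (maxset T s))}"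

text \<open>\<open>\<AA> = T \<union> {t_\<epsilon>}\<close>, with \<open>None\<close> playing the role of the empty transition \<open>t_\<epsilon>\<close>.\<close>
definition Aset :: "('s,'a) trans set \<Rightarrow> ('s,'a) trans option set" where
  "Aset T = Some ` T \<union> {None}"

definition procspace :: "'s set \<Rightarrow> ('s,'a) trans set \<Rightarrow> (('s,'a) trans \<times> ('s,'a) trans) set
   \<Rightarrow> (('s,'a) trans set \<times> ('s,'a) trans option) set" where
  "procspace S T I = Xsets S T I \<times> Aset T"

definition conc_op :: "'s set \<Rightarrow> ('s,'a) trans set \<Rightarrow> (('s,'a) trans \<times> ('s,'a) trans) set
   \<Rightarrow> (('s,'a) trans set \<times> ('s,'a) trans option) set
   \<Rightarrow> (('s,'a) trans set \<times> ('s,'a) trans option) set" where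
  "conc_op S T I X = {(R,t) \<in> procspace S T I. \<exists>M \<in> Xsets S T I. sqsub I M R \<and> (M,t) \<in> X}"

end

theory Submission
  imports Defs
begin

text \<open>
  The relation \<open>\<sqsubseteq>\<close> is reflexive and, on \<open>\<X>\<close>, transitive; then \<open>\<langle>\<otimes>\<rangle>\<close> is a closure
  operator and idempotency is immediate. Transitivity holds because a chain \<open>M \<sqsubseteq> N \<sqsubseteq> R\<close>
  in \<open>\<X>\<close> always collapses: if \<open>N\<close> is conflict-free, every transition of \<open>N\<close> outside \<open>M\<close>
  would be independent of all of \<open>M\<close>, so \<open>M = N\<close>; if \<open>N\<close> is a nonempty maximal set
  \<open>\<XX>(s)\<close>, then \<open>R\<close> has a transition with source \<open>s\<close> and so \<open>R \<subseteq> \<XX>(s) = N\<close>.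
\<close>

lemma sqsub_refl: "sqsub I M M"
  unfolding sqsub_def by simp

lemma Xsets_cases:
  assumes "M \<in> Xsets S T I"
  obtains s where "M = maxset T s" | "conflict_free T I M"
  using assms unfolding Xsets_def support_set_def is_maxset_def by blast

lemma Xsets_subset_maxset:
  assumes "R \<in> Xsets S T I" "t \<in> R"
  shows "R \<subseteq> maxset T (src t)"
  using assms(1)
proof (cases rule: Xsets_cases)
  case (1 s)
  then show ?thesis using assms(2) unfolding maxset_def by auto
next
  case 2
  then show ?thesis using assms(2) unfolding conflict_free_def maxset_def by fastforce
qed

lemma sqsub_conflict_free_eq:
  assumes cf: "conflict_free T I N" and MN: "sqsub I M N"
  shows "M = N"
proof (rule ccontr)
  assume "M \<noteq> N"
  with MN obtain x where x: "x \<in> N" "x \<notin> M" unfolding sqsub_def by blast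
  have "indep_conc I x t'" if "t' \<in> M" for t'
  proof -
    have "t' \<in> N" "x \<noteq> t'" using MN that x unfolding sqsub_def by auto
    then show ?thesis using cf x(1) unfolding conflict_free_def by blast
  qed
  then show False using MN x unfolding sqsub_def by blast
qed

lemma sqsub_chain_collapse:
  assumes "N \<in> Xsets S T I" "R \<in> Xsets S T I" "sqsub I M N" "sqsub I N R"
  shows "M = N \<or> N = R"
  using assms(1)
proof (cases rule: Xsets_cases)
  case (1 s)
  show ?thesis
  proof (cases "N = {}")
    case True
    then show ?thesis using assms(3) unfolding sqsub_def by auto
  next
    case False
    then obtain t where t: "t \<in> N" by blast
    then have "src t = s" using 1 unfolding maxset_def by simp
    moreover have "N \<subseteq> R" using assms(4) unfolding sqsub_def by simp
    ultimately have "R \<subseteq> N"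
      using Xsets_subset_maxset[OF assms(2)] t 1 by blast
    then show ?thesis using \<open>N \<subseteq> R\<close> by blast
  qed
next
  case 2
  then show ?thesis using sqsub_conflict_free_eq assms(3) by blast
qed

lemma sqsub_trans_Xsets:
  assumes "N \<in> Xsets S T I" "R \<in> Xsets S T I" "sqsub I M N" "sqsub I N R"
  shows "sqsub I M R"
  using sqsub_chain_collapse[OF assms] assms(3,4) by auto

lemma conc_op_absorb:
  "conc_op S T I (conc_op S T I X) = conc_op S T I X"
proof (intro equalityI subsetI)
  fix p assume p: "p \<in> conc_op S T I (conc_op S T I X)"
  then obtain R t N M where p_eq: "p = (R, t)" and Rt: "(R, t) \<in> procspace S T I"
    and N: "N \<in> Xsets S T I" "sqsub I N R"
    and M: "M \<in> Xsets S T I" "sqsub I M N" "(M, t) \<in> X"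
    unfolding conc_op_def by blast
  have "R \<in> Xsets S T I" using Rt unfolding procspace_def by blast
  then have "sqsub I M R" using sqsub_trans_Xsets N M by blast
  then show "p \<in> conc_op S T I X" using p_eq Rt M unfolding conc_op_def by blast
next
  fix p assume p: "p \<in> conc_op S T I X"
  then obtain R t where p_eq: "p = (R, t)" and Rt: "(R, t) \<in> procspace S T I"
    unfolding conc_op_def by blast
  have "R \<in> Xsets S T I" using Rt unfolding procspace_def by blast
  then show "p \<in> conc_op S T I (conc_op S T I X)"
    using p p_eq Rt sqsub_refl unfolding conc_op_def[of S T I "conc_op S T I X"] by blast
qed

theorem proposition1:
  fixes S :: "'s set" and s0 :: 's and Sig :: "'a set"
    and T :: "('s,'a) trans set" and I :: "(('s,'a) trans \<times> ('s,'a) trans) set"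
    and X :: "(('s,'a) trans set \<times> ('s,'a) trans option) set"
  assumes "tsi S s0 T I Sig"
    and "X \<subseteq> procspace S T I"
  shows "conc_op S T I (conc_op S T I X) = conc_op S T I X"
  by (rule conc_op_absorb)

end
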